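(* Let $\rho>0$ and assume $\Gamma(0)<\Gamma(1)$ and $1+\rho\ln\mu(0)<0$. Let $\nu_\star(\rho)$ be the unique solution in $(0,\mu(1))$ of $1+\rho\ln G(\nu,\mu(1))=0$, and assume $1+\rho\ln\big(\Gamma(1)^{\nu_\star(\rho)}\Gamma(0)^{1-\nu_\star(\rho)}\big)<0$. Let $n\mapsto L_n$ be a $\rho$-admissible scaling. Then $\nu$ can be selected in the interval $(\nu_\star(\rho),\mu(1))$ such that for every sequence $(\ell_n)$ that is $\nu$-associated with the scaling, $\lim_{n\to\infty}\mathbb{E}[I^{(\ell_n)}_n(L_n)]=\infty$.
   Context: Homogeneous binary MAG model. Fix $\mu(0),\mu(1)\in(0,1)$ with $\mu(0)+\mu(1)=1$, and a symmetric $2\times2$ matrix $(q(a,b))$ with $q(0,1)=q(1,0)$ and $0<q(a,b)<1$. On a probability space, $\{A,A_\ell(u):\ell,u\ge1\}$ are i.i.d. $\{0,1\}$-valued with $\mathbb{P}[A=1]=\mu(1)$, independent of i.i.d. uniform$(0,1)$ variables $\{U(u,v):1\le u<v\}$, $U(v,u)=U(u,v)$. With $\mathbf A_L(u)=(A_1(u),\dots,A_L(u))$ and $Q_L(\mathbf a,\mathbf b)=\prod_{\ell=1}^Lq(a_\ell,b_\ell)$, the graph $\mathbb{M}(n;L)$ on $\{1,\dots,n\}$ has an edge between distinct $u,v$ iff $U(u,v)\le Q_L(\mathbf A_L(u),\mathbf A_L(v))$. Let $S_L(u)=A_1(u)+\dots+A_L(u)$; for $\ell\in\{0,\dots,L\}$,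 $I^{(\ell)}_n(L)$ is the number of nodes $u\in\{1,\dots,n\}$ isolated in $\mathbb{M}(n;L)$ with $S_L(u)=\ell$. $\Gamma(a)=\mathbb{E}[q(a,A)]$. A scaling $n\mapsto L_n$ of positive integers is $\rho$-admissible if $L_n\sim\rho\ln n$. For $\nu\in(0,1)$, a sequence $(\ell_n)$ of nonnegative integers is $\nu$-associated with the scaling if $\ell_n\le L_n$ for all $n$ and $\ell_n/L_n\to\nu$. For $0<\nu,\mu<1$, $G(\nu,\mu)=(\mu/\nu)^\nu\big((1-\mu)/(1-\nu)\big)^{1-\nu}$, extended continuously to $[0,1]$ by $G(0,\mu)=1-\mu$, $G(1,\mu)=\mu$. *)

theory Defs
  imports "HOL-Probability.Probability" "HOL-Library.Landau_Symbols"
begin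

text \<open>Attributes are encoded as naturals 0 and 1. mu a = probability of attribute a,
  q a b = the 2x2 affinity matrix.\<close>

definition attr_pmf :: "(nat \<Rightarrow> real) \<Rightarrow> nat pmf" where
  "attr_pmf mu = map_pmf (\<lambda>b. if b then 1 else 0) (bernoulli_pmf (mu 1))"

definition attr_law :: "(nat \<Rightarrow> real) \<Rightarrow> nat \<Rightarrow> nat \<Rightarrow> (nat \<times> nat \<Rightarrow> nat) pmf" where
  "attr_law mu n L = Pi_pmf ({1..n} \<times> {1..L}) 0 (\<lambda>_. attr_pmf mu)"

definition unif_law :: "nat \<Rightarrow> (nat \<times> nat \<Rightarrow> real) measure" where
  "unif_law n = PiM {(u, v). 1 \<le> u \<and> u < v \<and> v \<le> n}
                    (\<lambda>_. uniform_measure lborel {0<..<1::real})"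

definition mag_space :: "(nat \<Rightarrow> real) \<Rightarrow> nat \<Rightarrow> nat \<Rightarrow> ((nat \<times> nat \<Rightarrow> nat) \<times> (nat \<times> nat \<Rightarrow> real)) measure" where
  "mag_space mu n L = measure_pmf (attr_law mu n L) \<Otimes>\<^sub>M unif_law n"

definition QL :: "(nat \<Rightarrow> nat \<Rightarrow> real) \<Rightarrow> nat \<Rightarrow> (nat \<times> nat \<Rightarrow> nat) \<Rightarrow> nat \<Rightarrow> nat \<Rightarrow> real" where
  "QL q L A u v = (\<Prod>l\<in>{1..L}. q (A (u, l)) (A (v, l)))"

definition SL :: "nat \<Rightarrow> (nat \<times> nat \<Rightarrow> nat) \<Rightarrow> nat \<Rightarrow> nat" where
  "SL L A u = (\<Sum>l\<in>{1..L}. A (u, l))"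

definition mag_edge :: "(nat \<Rightarrow> nat \<Rightarrow> real) \<Rightarrow> nat \<Rightarrow> (nat \<times> nat \<Rightarrow> nat) \<Rightarrow> (nat \<times> nat \<Rightarrow> real) \<Rightarrow> nat \<Rightarrow> nat \<Rightarrow> bool" where
  "mag_edge q L A U u v \<longleftrightarrow> u \<noteq> v \<and> U (min u v, max u v) \<le> QL q L A u v"

definition isolated_count :: "(nat \<Rightarrow> nat \<Rightarrow> real) \<Rightarrow> nat \<Rightarrow> nat \<Rightarrow> nat \<Rightarrow> (nat \<times> nat \<Rightarrow> nat) \<times> (nat \<times> nat \<Rightarrow> real) \<Rightarrow> nat" where
  "isolated_count q n L l \<omega> =
     card {u \<in> {1..n}. (\<forall>v\<in>{1..n}. \<not> mag_edge q L (fst \<omega>) (snd \<omega>) u v) \<and> SL L (fst \<omega>) u = l}"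

definition expected_isolated :: "(nat \<Rightarrow> real) \<Rightarrow> (nat \<Rightarrow> nat \<Rightarrow> real) \<Rightarrow> nat \<Rightarrow> nat \<Rightarrow> nat \<Rightarrow> real" where
  "expected_isolated mu q n L l = (\<integral>\<omega>. real (isolated_count q n L l \<omega>) \<partial>mag_space mu n L)"

definition Gam :: "(nat \<Rightarrow> real) \<Rightarrow> (nat \<Rightarrow> nat \<Rightarrow> real) \<Rightarrow> nat \<Rightarrow> real" where
  "Gam mu q a = mu 0 * q a 0 + mu 1 * q a 1"

definition G :: "real \<Rightarrow> real \<Rightarrow> real" where
  "G \<nu> m = (if \<nu> = 0 then 1 - m else if \<nu> = 1 then m
            else (m / \<nu>) powr \<nu> * ((1 - m) / (1 - \<nu>)) powr (1 - \<nu>))"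

definition nu_star :: "(nat \<Rightarrow> real) \<Rightarrow> real \<Rightarrow> real" where
  "nu_star mu \<rho> = (THE \<nu>. \<nu> \<in> {0<..<mu 1} \<and> 1 + \<rho> * ln (G \<nu> (mu 1)) = 0)"

definition admissible :: "real \<Rightarrow> (nat \<Rightarrow> nat) \<Rightarrow> bool" where
  "admissible \<rho> L \<longleftrightarrow> (\<forall>n. 0 < L n) \<and> (\<lambda>n. real (L n)) \<sim>[sequentially] (\<lambda>n. \<rho> * ln (real n))"

definition associated :: "real \<Rightarrow> (nat \<Rightarrow> nat) \<Rightarrow> (nat \<Rightarrow> nat) \<Rightarrow> bool" where
  "associated \<nu> L ls \<longleftrightarrow> (\<forall>n. ls n \<le> L n) \<and> (\<lambda>n. real (ls n) / real (L n)) \<longlonglongrightarrow> \<nu>"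

end

theory Submission
  imports Defs "HOL-Real_Asymp.Real_Asymp"
begin

text \<open>
  A vertex u has S_L(u) = l with probability P = (L choose l) mu(1)^l mu(0)^(L-l), and given its
  attributes it is adjacent to any fixed other vertex with probability H = Gamma(1)^l Gamma(0)^(L-l).
  The union bound over the possible neighbours gives E[I^(l)_n(L)] >= n P (1 - n H).
  Up to a factor 1/(L+1), P equals G(l/L, mu(1))^L, so with L ~ rho ln n and l/L -> nu,
  n P = n^(1 + rho ln G(nu, mu(1)) + o(1)) and n H = n^(1 + rho ln (Gamma(1)^nu Gamma(0)^(1-nu)) + o(1)).
  As ln G(-, mu(1)) is strictly increasing on (0, mu(1)], the first exponent is positive for every
  nu > nu_star(rho); the second is negative at nu_star(rho) by hypothesis, hence also for nu slightly
  larger, and for such nu the lower bound tends to infinity.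
\<close>

section \<open>Products and sums of indicators\<close>

lemma prod_cartesian_rows:
  fixes \<Phi> :: "nat \<times> nat \<Rightarrow> 'a :: comm_monoid_mult"
  assumes "W \<subseteq> {1..n}" and "\<And>w l. w \<notin> W \<Longrightarrow> \<Phi> (w, l) = 1"
  shows "(\<Prod>x\<in>{1..n} \<times> {1..L}. \<Phi> x) = (\<Prod>w\<in>W. \<Prod>l\<in>{1..L}. \<Phi> (w, l))"
proof -
  have "(\<Prod>x\<in>{1..n} \<times> {1..L}. \<Phi> x) = (\<Prod>w\<in>{1..n}. \<Prod>l\<in>{1..L}. \<Phi> (w, l))"
    by (simp add: prod.cartesian_product)
  also have "\<dots> = (\<Prod>w\<in>W. \<Prod>l\<in>{1..L}. \<Phi> (w, l))"
    using assms by (intro prod.mono_neutral_right) auto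
  finally show ?thesis .
qed

lemma prod_of_bool_eq_Ball:
  assumes "finite A"
  shows "(\<Prod>x\<in>A. of_bool (P x)) = (of_bool (\<forall>x\<in>A. P x) :: 'a :: comm_semiring_1)"
  using assms by (induction A rule: finite_induct) auto

lemma prod_indicator_pow:
  fixes L :: nat
  assumes "B \<subseteq> {1..L}"
  shows "(\<Prod>l\<in>{1..L}. f (indicator B l :: nat)) = f 1 ^ card B * f 0 ^ (L - card B)"
proof -
  have "(\<Prod>l\<in>{1..L}. f (indicator B l :: nat)) = (\<Prod>l\<in>{1..L}. if l \<in> B then f 1 else f 0)"
    by (intro prod.cong) auto
  also have "\<dots> = f 1 ^ card ({1..L} \<inter> B) * f 0 ^ card ({1..L} - B)"
    by (subst prod.If_cases) (auto simp: Diff_eq)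
  also have "card ({1..L} \<inter> B) = card B" using assms by (simp add: Int_absorb1)
  also have "card ({1..L} - B) = L - card B" using assms by (simp add: card_Diff_subset finite_subset)
  finally show ?thesis .
qed

lemma of_bool_isolated_ge_union_bound:
  assumes "finite V" "u \<in> V" "\<not> E u"
  shows "of_bool S - (\<Sum>v\<in>V - {u}. of_bool (S \<and> E v)) \<le> (of_bool ((\<forall>v\<in>V. \<not> E v) \<and> S) :: real)"
proof (cases "S \<and> (\<exists>v\<in>V. E v)")
  case True
  then obtain v where v: "v \<in> V" "E v" by blast
  with assms have "v \<in> V - {u}" by auto
  with assms have "of_bool (S \<and> E v) \<le> (\<Sum>v\<in>V - {u}. of_bool (S \<and> E v) :: real)"
    by (intro member_le_sum) auto
  with True v show ?thesis by simp
next
  case False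
  then show ?thesis by (auto intro: sum_nonneg)
qed

section \<open>Attribute patterns\<close>

lemma set_pmf_attr_pmf: "set_pmf (attr_pmf mu) \<subseteq> {0, 1}"
  unfolding attr_pmf_def by auto

lemma attr_law_values:
  assumes "A \<in> set_pmf (attr_law mu n L)"
  shows "A x \<in> {0, 1}"
proof -
  have "A \<in> PiE_dflt ({1..n} \<times> {1..L}) 0 (set_pmf \<circ> (\<lambda>_. attr_pmf mu))"
    using assms unfolding attr_law_def by (simp add: set_Pi_pmf)
  then show ?thesis
    using set_pmf_attr_pmf[of mu] by (cases x) (auto simp: PiE_dflt_def split: if_splits)
qed

lemma prod_of_bool_eq_indicator:
  fixes A :: "nat \<times> nat \<Rightarrow> nat"
  assumes A: "\<forall>l\<in>{1..L}. A (u, l) \<in> {0, 1::nat}" and B: "B \<subseteq> {1..L}"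
  shows "(\<Prod>l\<in>{1..L}. of_bool (A (u, l) = indicator B l) :: real) =
         of_bool (B = {l\<in>{1..L}. A (u, l) = 1})"
proof -
  have match: "A (u, l) = indicator B l \<longleftrightarrow> (l \<in> B \<longleftrightarrow> A (u, l) = 1)" if "l \<in> {1..L}" for l
    using A that by (auto simp: indicator_def)
  have "(\<forall>l\<in>{1..L}. A (u, l) = indicator B l) \<longleftrightarrow> (\<forall>l\<in>{1..L}. l \<in> B \<longleftrightarrow> A (u, l) = 1)"
    by (rule ball_cong[OF refl match])
  also have "\<dots> \<longleftrightarrow> B = {l\<in>{1..L}. A (u, l) = 1}"
    using B by blast
  finally have "(\<forall>l\<in>{1..L}. A (u, l) = indicator B l) \<longleftrightarrow> B = {l\<in>{1..L}. A (u, l) = 1}" .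
  then show ?thesis by (subst prod_of_bool_eq_Ball) simp_all
qed

lemma of_bool_SL_eq_sum_patterns:
  assumes A: "\<forall>l\<in>{1..L}. A (u, l) \<in> {0, 1::nat}"
  shows "(of_bool (SL L A u = k) :: real) =
         (\<Sum>B | B \<subseteq> {1..L} \<and> card B = k. \<Prod>l\<in>{1..L}. of_bool (A (u, l) = indicator B l))"
proof -
  define B0 where "B0 = {l\<in>{1..L}. A (u, l) = 1}"
  have "SL L A u = (\<Sum>l\<in>{1..L}. of_bool (l \<in> B0))"
    unfolding SL_def B0_def using A by (intro sum.cong) auto
  also have "\<dots> = card ({1..L} \<inter> B0)" by simp
  also have "{1..L} \<inter> B0 = B0" by (auto simp: B0_def)
  finally have SL: "SL L A u = card B0" .
  have "(\<Sum>B | B \<subseteq> {1..L} \<and> card B = k. \<Prod>l\<in>{1..L}. of_bool (A (u, l) = indicator B l)) =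
        (\<Sum>B | B \<subseteq> {1..L} \<and> card B = k. of_bool (B = B0) :: real)"
    using prod_of_bool_eq_indicator[OF A] by (intro sum.cong) (auto simp: B0_def)
  also have "\<dots> = of_bool (B0 \<subseteq> {1..L} \<and> card B0 = k)"
    by (simp add: of_bool_def sum.delta')
  moreover have "B0 \<subseteq> {1..L}" by (auto simp: B0_def)
  ultimately show ?thesis by (simp add: SL)
qed

lemma QL_eq_pattern:
  assumes A: "\<forall>l\<in>{1..L}. A (u, l) \<in> {0, 1::nat}" and B: "B = {l\<in>{1..L}. A (u, l) = 1}"
  shows "QL q L A u v = (\<Prod>l\<in>{1..L}. q (indicator B l) (A (v, l)))"
  unfolding QL_def
proof (intro prod.cong refl)
  fix l assume "l \<in> {1..L}"
  with A have "A (u, l) = indicator B l" by (auto simp: B indicator_def)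
  then show "q (A (u, l)) (A (v, l)) = q (indicator B l) (A (v, l))" by simp
qed

lemma of_bool_SL_eq_times_QL:
  assumes A: "\<forall>l\<in>{1..L}. A (u, l) \<in> {0, 1::nat}"
  shows "(of_bool (SL L A u = k) :: real) * QL q L A u v =
         (\<Sum>B | B \<subseteq> {1..L} \<and> card B = k. (\<Prod>l\<in>{1..L}. of_bool (A (u, l) = indicator B l)) *
                                          (\<Prod>l\<in>{1..L}. q (indicator B l) (A (v, l))))"
  unfolding of_bool_SL_eq_sum_patterns[OF A] sum_distrib_right
proof (rule sum.cong[OF refl])
  fix B assume B: "B \<in> {B. B \<subseteq> {1..L} \<and> card B = k}"
  let ?match = "\<Prod>l\<in>{1..L}. of_bool (A (u, l) = indicator B l) :: real"
  show "?match * QL q L A u v = ?match * (\<Prod>l\<in>{1..L}. q (indicator B l) (A (v, l)))"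
  proof (cases "B = {l\<in>{1..L}. A (u, l) = 1}")
    case True
    then show ?thesis by (simp only: QL_eq_pattern[OF A True])
  next
    case False
    from B have "B \<subseteq> {1..L}" by simp
    with False have "?match = 0"
      by (simp only: prod_of_bool_eq_indicator[OF A] of_bool_eq(1) simp_thms)
    then show ?thesis by simp
  qed
qed

lemma QL_range:
  assumes "A \<in> set_pmf (attr_law mu n L)"
    and q: "\<And>a b. a \<in> {0, 1} \<Longrightarrow> b \<in> {0, 1} \<Longrightarrow> 0 \<le> q a b \<and> q a b \<le> 1"
  shows "0 \<le> QL q L A u v \<and> QL q L A u v \<le> 1"
  unfolding QL_def using q attr_law_values[OF assms(1)]
  by (auto intro!: prod_nonneg prod_le_1)

section \<open>The probability space of the graph\<close>

lemma borel_measurable_pmf: "f \<in> borel_measurable (measure_pmf p)"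
  by simp

lemma prob_space_unif_law: "prob_space (unif_law n)"
  unfolding unif_law_def
  by (intro prob_space_PiM prob_space_uniform_measure) auto

lemma prob_space_mag_space: "prob_space (mag_space mu n L)"
  unfolding mag_space_def
  by (intro prob_space_pair prob_space_measure_pmf prob_space_unif_law)

lemma pair_sigma_finite_attr_law_unif_law:
  "pair_sigma_finite (measure_pmf (attr_law mu n L)) (unif_law n)"
  by (simp add: pair_sigma_finite_def prob_space_imp_sigma_finite prob_space_unif_law
      prob_space_measure_pmf)

lemma measure_unif_law_coordinate_le:
  assumes "1 \<le> i" "i < j" "j \<le> n" "0 \<le> c" "c \<le> 1"
  shows "measure (unif_law n) {y\<in>space (unif_law n). y (i, j) \<le> c} = c"
proof -
  let ?J = "{(u, v). 1 \<le> u \<and> u < v \<and> v \<le> n}"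
  let ?U = "uniform_measure lborel {0<..<1::real}"
  interpret product_prob_space "\<lambda>_. ?U" ?J
    by (simp add: product_prob_space_def product_sigma_finite_def prob_space_imp_sigma_finite
        prob_space_uniform_measure product_prob_space_axioms_def)
  have "emeasure (unif_law n) {y\<in>space (unif_law n). y (i, j) \<in> {..c}} = emeasure ?U {..c}"
    unfolding unif_law_def using assms by (intro emeasure_PiM_Collect_single) auto
  then have "measure (unif_law n) {y\<in>space (unif_law n). y (i, j) \<le> c} = measure ?U {..c}"
    by (simp add: measure_def)
  also have "\<dots> = c"
  proof (cases "c < 1")
    case True
    then have "{0<..<1} \<inter> {..c} = {0<..c::real}" by auto
    with assms True show ?thesis by simp
  next
    case False
    with assms have "{0<..<1} \<inter> {..c} = {0<..<1::real}" by auto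
    with assms False show ?thesis by simp
  qed
  finally show ?thesis .
qed

lemma measurable_unif_law_coordinate:
  assumes "1 \<le> i" "i < j" "j \<le> n"
  shows "(\<lambda>y. y (i, j)) \<in> borel_measurable (unif_law n)"
proof -
  have "(\<lambda>y. y (i, j)) \<in> measurable (unif_law n) (uniform_measure lborel {0<..<1::real})"
    unfolding unif_law_def using assms by (intro measurable_component_singleton) auto
  then show ?thesis by (simp cong: measurable_cong_sets)
qed

lemma measurable_mag_space_fst_iff:
  "(\<lambda>\<omega>. g (fst \<omega>)) \<in> measurable (mag_space mu n L) N \<longleftrightarrow> g \<in> UNIV \<rightarrow> space N"
proof
  assume "g \<in> UNIV \<rightarrow> space N"
  then have "g \<in> measurable (measure_pmf (attr_law mu n L)) N" by simp
  then show "(\<lambda>\<omega>. g (fst \<omega>)) \<in> measurable (mag_space mu n L) N"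
    unfolding mag_space_def by (rule measurable_compose[OF measurable_fst])
next
  assume "(\<lambda>\<omega>. g (fst \<omega>)) \<in> measurable (mag_space mu n L) N"
  note g = measurable_space[OF this]
  obtain y where y: "y \<in> space (unif_law n)"
    using prob_space.not_empty[OF prob_space_unif_law] by blast
  show "g \<in> UNIV \<rightarrow> space N"
  proof
    fix A :: "nat \<times> nat \<Rightarrow> nat"
    have "(A, y) \<in> space (mag_space mu n L)"
      using y unfolding mag_space_def by (simp add: space_pair_measure)
    from g[OF this] show "g A \<in> space N" by simp
  qed
qed

lemma measurable_mag_space_snd_coordinate:
  assumes "1 \<le> i" "i < j" "j \<le> n"
  shows "(\<lambda>\<omega>. snd \<omega> (i, j)) \<in> borel_measurable (mag_space mu n L)"
  unfolding mag_space_def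
  by (rule measurable_compose[OF measurable_snd measurable_unif_law_coordinate[OF assms]])

lemma integral_mag_space_fst:
  fixes g :: "(nat \<times> nat \<Rightarrow> nat) \<Rightarrow> real"
  assumes g: "\<And>A. \<bar>g A\<bar> \<le> C"
  shows "(\<integral>\<omega>. g (fst \<omega>) \<partial>mag_space mu n L) = measure_pmf.expectation (attr_law mu n L) g"
proof -
  interpret pair_sigma_finite "measure_pmf (attr_law mu n L)" "unif_law n"
    by (rule pair_sigma_finite_attr_law_unif_law)
  interpret P: prob_space "mag_space mu n L" by (rule prob_space_mag_space)
  interpret U: prob_space "unif_law n" by (rule prob_space_unif_law)
  have int: "integrable (mag_space mu n L) (\<lambda>\<omega>. g (fst \<omega>))"
    by (intro P.integrable_const_bound[where B=C]) (auto simp: g measurable_mag_space_fst_iff)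
  have "(\<integral>\<omega>. g (fst \<omega>) \<partial>mag_space mu n L) =
        (\<integral>A. (\<integral>y. g A \<partial>unif_law n) \<partial>measure_pmf (attr_law mu n L))"
    using integral_fst'[OF int[unfolded mag_space_def]] unfolding mag_space_def by simp
  then show ?thesis by (simp add: U.prob_space)
qed

lemma integral_mag_space_threshold:
  fixes g h :: "(nat \<times> nat \<Rightarrow> nat) \<Rightarrow> real"
  assumes g: "\<And>A. \<bar>g A\<bar> \<le> C" and ij: "1 \<le> i" "i < j" "j \<le> n"
    and h: "\<And>A. A \<in> set_pmf (attr_law mu n L) \<Longrightarrow> 0 \<le> h A \<and> h A \<le> 1"
  shows "(\<integral>\<omega>. g (fst \<omega>) * of_bool (snd \<omega> (i, j) \<le> h (fst \<omega>)) \<partial>mag_space mu n L) =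
         measure_pmf.expectation (attr_law mu n L) (\<lambda>A. g A * h A)"
proof -
  interpret pair_sigma_finite "measure_pmf (attr_law mu n L)" "unif_law n"
    by (rule pair_sigma_finite_attr_law_unif_law)
  interpret P: prob_space "mag_space mu n L" by (rule prob_space_mag_space)
  note [measurable] = measurable_mag_space_snd_coordinate[OF ij] measurable_unif_law_coordinate[OF ij]
  have [measurable]: "(\<lambda>\<omega>. h (fst \<omega>)) \<in> borel_measurable (mag_space mu n L)"
    "(\<lambda>\<omega>. g (fst \<omega>)) \<in> borel_measurable (mag_space mu n L)"
    by (auto simp: measurable_mag_space_fst_iff)
  have int: "integrable (mag_space mu n L) (\<lambda>\<omega>. g (fst \<omega>) * of_bool (snd \<omega> (i, j) \<le> h (fst \<omega>)))"
    by (intro P.integrable_const_bound[where B=C] AE_I2)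
       (auto simp: abs_mult intro: order.trans[OF _ g])
  have "(\<integral>\<omega>. g (fst \<omega>) * of_bool (snd \<omega> (i, j) \<le> h (fst \<omega>)) \<partial>mag_space mu n L) =
        (\<integral>A. (\<integral>y. g A * of_bool (y (i, j) \<le> h A) \<partial>unif_law n) \<partial>measure_pmf (attr_law mu n L))"
    using integral_fst'[OF int[unfolded mag_space_def]] unfolding mag_space_def by simp
  also have "\<dots> = measure_pmf.expectation (attr_law mu n L) (\<lambda>A. g A * h A)"
  proof (intro integral_cong_AE AE_pmfI)
    fix A assume A: "A \<in> set_pmf (attr_law mu n L)"
    let ?S = "{y\<in>space (unif_law n). y (i, j) \<le> h A}"
    have "(\<integral>y. g A * of_bool (y (i, j) \<le> h A) \<partial>unif_law n) = (\<integral>y. g A * indicator ?S y \<partial>unif_law n)"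
      by (intro Bochner_Integration.integral_cong) (auto simp: indicator_def)
    also have "\<dots> = g A * measure (unif_law n) ?S"
      by (simp add: Int_absorb2)
    also have "\<dots> = g A * h A"
      using measure_unif_law_coordinate_le[OF ij, of "h A"] h[OF A] by simp
    finally show "(\<integral>y. g A * of_bool (y (i, j) \<le> h A) \<partial>unif_law n) = g A * h A" .
  qed (rule borel_measurable_pmf)+
  finally show ?thesis .
qed

lemma measurable_mag_edge:
  assumes "u \<in> {1..n}" "v \<in> {1..n}"
  shows "Measurable.pred (mag_space mu n L) (\<lambda>\<omega>. mag_edge q L (fst \<omega>) (snd \<omega>) u v)"
proof (cases "u = v")
  case True
  then show ?thesis by (simp add: mag_edge_def)
next
  case False
  with assms have ij: "1 \<le> min u v" "min u v < max u v" "max u v \<le> n" by auto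
  note [measurable] = measurable_mag_space_snd_coordinate[OF ij]
  have [measurable]: "(\<lambda>\<omega>. QL q L (fst \<omega>) u v) \<in> borel_measurable (mag_space mu n L)"
    by (simp add: measurable_mag_space_fst_iff[where g = "\<lambda>A. QL q L A u v"])
  from False show ?thesis unfolding mag_edge_def by measurable
qed

lemma measurable_SL_eq: "Measurable.pred (mag_space mu n L) (\<lambda>\<omega>. SL L (fst \<omega>) u = k)"
  by (simp add: measurable_mag_space_fst_iff[where g = "\<lambda>A. SL L A u = k"])

lemma integrable_of_bool_mag_space:
  assumes "Measurable.pred (mag_space mu n L) P"
  shows "integrable (mag_space mu n L) (\<lambda>\<omega>. of_bool (P \<omega>) :: real)"
proof -
  interpret prob_space "mag_space mu n L" by (rule prob_space_mag_space)
  show ?thesis using assms by (intro integrable_const_bound[where B = 1]) auto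
qed

section \<open>The first-moment lower bound\<close>

context
  fixes mu :: "nat \<Rightarrow> real"
  assumes mu_range: "0 \<le> mu 1" "mu 1 \<le> 1" and mu_sum: "mu 0 + mu 1 = 1"
begin

lemma mu0_eq: "mu 0 = 1 - mu 1"
  using mu_sum by simp

lemma expectation_attr_pmf: "measure_pmf.expectation (attr_pmf mu) f = mu 0 * f 0 + mu 1 * f 1"
proof -
  have "f 0 * mu 0 + f 0 * mu 1 = f 0"
    using mu_sum by (metis distrib_left mult.right_neutral)
  then show ?thesis unfolding attr_pmf_def using mu_range by (simp add: algebra_simps)
qed

lemma expectation_attr_law_prod:
  assumes "\<And>x y. y \<in> {0, 1} \<Longrightarrow> 0 \<le> F x y"
  shows "measure_pmf.expectation (attr_law mu n L) (\<lambda>A. \<Prod>x\<in>{1..n} \<times> {1..L}. F x (A x)) =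
         (\<Prod>x\<in>{1..n} \<times> {1..L}. mu 0 * F x 0 + mu 1 * F x 1)"
  unfolding attr_law_def
  by (subst expectation_prod_Pi_pmf)
     (use set_pmf_attr_pmf[of mu] in \<open>auto simp: assms expectation_attr_pmf
       intro!: integrable_measure_pmf_finite finite_subset[OF set_pmf_attr_pmf]\<close>)

lemma expectation_row_prod:
  assumes u: "u \<in> {1..n}" and f: "\<And>l y. y \<in> {0, 1} \<Longrightarrow> 0 \<le> f l y"
  shows "measure_pmf.expectation (attr_law mu n L) (\<lambda>A. \<Prod>l\<in>{1..L}. f l (A (u, l))) =
         (\<Prod>l\<in>{1..L}. mu 0 * f l 0 + mu 1 * f l 1)"
proof -
  define F where "F = (\<lambda>(w, l). if w = u then f l else (\<lambda>_. 1::real))"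
  have "(\<Prod>x\<in>{1..n} \<times> {1..L}. F x (A x)) = (\<Prod>l\<in>{1..L}. f l (A (u, l)))" for A
    using u by (subst prod_cartesian_rows[of "{u}"]) (auto simp: F_def)
  moreover have "(\<Prod>x\<in>{1..n} \<times> {1..L}. mu 0 * F x 0 + mu 1 * F x 1) =
                 (\<Prod>l\<in>{1..L}. mu 0 * f l 0 + mu 1 * f l 1)"
    using u mu_sum by (subst prod_cartesian_rows[of "{u}"]) (auto simp: F_def)
  moreover have "measure_pmf.expectation (attr_law mu n L) (\<lambda>A. \<Prod>x\<in>{1..n} \<times> {1..L}. F x (A x)) =
                 (\<Prod>x\<in>{1..n} \<times> {1..L}. mu 0 * F x 0 + mu 1 * F x 1)"
    by (rule expectation_attr_law_prod) (auto simp: F_def f)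
  ultimately show ?thesis by simp
qed

lemma expectation_two_rows_prod:
  assumes uv: "u \<in> {1..n}" "v \<in> {1..n}" "u \<noteq> v"
    and f: "\<And>l y. y \<in> {0, 1} \<Longrightarrow> 0 \<le> f l y" and g: "\<And>l y. y \<in> {0, 1} \<Longrightarrow> 0 \<le> g l y"
  shows "measure_pmf.expectation (attr_law mu n L)
           (\<lambda>A. (\<Prod>l\<in>{1..L}. f l (A (u, l))) * (\<Prod>l\<in>{1..L}. g l (A (v, l)))) =
         (\<Prod>l\<in>{1..L}. mu 0 * f l 0 + mu 1 * f l 1) * (\<Prod>l\<in>{1..L}. mu 0 * g l 0 + mu 1 * g l 1)"
proof -
  define F where "F = (\<lambda>(w, l). if w = u then f l else if w = v then g l else (\<lambda>_. 1::real))"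
  have "(\<Prod>x\<in>{1..n} \<times> {1..L}. F x (A x)) =
        (\<Prod>l\<in>{1..L}. f l (A (u, l))) * (\<Prod>l\<in>{1..L}. g l (A (v, l)))" for A
    using uv by (subst prod_cartesian_rows[of "{u, v}"]) (auto simp: F_def)
  moreover have "(\<Prod>x\<in>{1..n} \<times> {1..L}. mu 0 * F x 0 + mu 1 * F x 1) =
      (\<Prod>l\<in>{1..L}. mu 0 * f l 0 + mu 1 * f l 1) * (\<Prod>l\<in>{1..L}. mu 0 * g l 0 + mu 1 * g l 1)"
    using uv mu_sum by (subst prod_cartesian_rows[of "{u, v}"]) (auto simp: F_def)
  moreover have "measure_pmf.expectation (attr_law mu n L) (\<lambda>A. \<Prod>x\<in>{1..n} \<times> {1..L}. F x (A x)) =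
                 (\<Prod>x\<in>{1..n} \<times> {1..L}. mu 0 * F x 0 + mu 1 * F x 1)"
    by (rule expectation_attr_law_prod) (auto simp: F_def f g)
  ultimately show ?thesis by simp
qed

lemma expectation_SL_eq:
  assumes u: "u \<in> {1..n}"
  shows "measure_pmf.expectation (attr_law mu n L) (\<lambda>A. of_bool (SL L A u = k)) =
         pmf (binomial_pmf L (mu 1)) k"
proof -
  let ?P = "attr_law mu n L" and ?F = "{B. B \<subseteq> {1..L} \<and> card B = k}"
  let ?match = "\<lambda>B A. \<Prod>l\<in>{1..L}. of_bool (A (u, l) = (indicator B l :: nat)) :: real"
  have "measure_pmf.expectation ?P (\<lambda>A. of_bool (SL L A u = k)) =
        measure_pmf.expectation ?P (\<lambda>A. \<Sum>B\<in>?F. ?match B A)"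
  proof (intro integral_cong_AE AE_pmfI)
    fix A assume "A \<in> set_pmf ?P"
    then have "\<forall>l\<in>{1..L}. A (u, l) \<in> {0, 1::nat}" using attr_law_values by blast
    then show "of_bool (SL L A u = k) = (\<Sum>B\<in>?F. ?match B A)"
      by (rule of_bool_SL_eq_sum_patterns)
  qed auto
  also have "\<dots> = (\<Sum>B\<in>?F. measure_pmf.expectation ?P (?match B))"
    by (intro Bochner_Integration.integral_sum measure_pmf.integrable_const_bound[where B=1])
       (auto simp: abs_prod intro!: prod_le_1)
  also have "\<dots> = (\<Sum>B\<in>?F. mu 1 ^ k * mu 0 ^ (L - k))"
  proof (intro sum.cong refl)
    fix B assume B: "B \<in> ?F"
    have "measure_pmf.expectation ?P (?match B) =
          (\<Prod>l\<in>{1..L}. mu 0 * of_bool (0 = (indicator B l :: nat)) +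
                              mu 1 * of_bool (1 = (indicator B l :: nat)))"
      by (rule expectation_row_prod[OF u, where f = "\<lambda>l y. of_bool (y = indicator B l)"]) simp
    also have "\<dots> = (\<Prod>l\<in>{1..L}. mu (indicator B l))"
      by (intro prod.cong) (auto simp: indicator_def)
    also have "\<dots> = mu 1 ^ k * mu 0 ^ (L - k)" using B prod_indicator_pow[of B L mu] by simp
    finally show "measure_pmf.expectation ?P (?match B) = mu 1 ^ k * mu 0 ^ (L - k)" .
  qed
  also have "\<dots> = pmf (binomial_pmf L (mu 1)) k"
    using mu_range by (simp add: n_subsets mu0_eq)
  finally show ?thesis .
qed

lemma integral_SL_eq:
  assumes "u \<in> {1..n}"
  shows "(\<integral>\<omega>. of_bool (SL L (fst \<omega>) u = k) \<partial>mag_space mu n L) = pmf (binomial_pmf L (mu 1)) k"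
  using expectation_SL_eq[OF assms]
  by (subst integral_mag_space_fst[where C = 1]) auto

context
  fixes q :: "nat \<Rightarrow> nat \<Rightarrow> real"
  assumes q_range: "\<And>a b. a \<in> {0, 1} \<Longrightarrow> b \<in> {0, 1} \<Longrightarrow> 0 \<le> q a b \<and> q a b \<le> 1"
begin

lemma expectation_SL_eq_times_QL:
  assumes uv: "u \<in> {1..n}" "v \<in> {1..n}" "u \<noteq> v"
  shows "measure_pmf.expectation (attr_law mu n L) (\<lambda>A. of_bool (SL L A u = k) * QL q L A u v) =
         pmf (binomial_pmf L (mu 1)) k * (Gam mu q 1 ^ k * Gam mu q 0 ^ (L - k))"
proof -
  let ?P = "attr_law mu n L" and ?F = "{B. B \<subseteq> {1..L} \<and> card B = k}"
  let ?match = "\<lambda>B A. \<Prod>l\<in>{1..L}. of_bool (A (u, l) = (indicator B l :: nat)) :: real"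
  let ?edge = "\<lambda>B A. \<Prod>l\<in>{1..L}. q (indicator B l) (A (v, l))"
  have ind01: "indicator B l \<in> {0, 1::nat}" for B :: "nat set" and l :: nat
    by (simp add: indicator_def)
  have "measure_pmf.expectation ?P (\<lambda>A. of_bool (SL L A u = k) * QL q L A u v) =
        measure_pmf.expectation ?P (\<lambda>A. \<Sum>B\<in>?F. ?match B A * ?edge B A)"
  proof (intro integral_cong_AE AE_pmfI)
    fix A assume "A \<in> set_pmf ?P"
    then have "\<forall>l\<in>{1..L}. A (u, l) \<in> {0, 1::nat}" using attr_law_values by blast
    then show "of_bool (SL L A u = k) * QL q L A u v = (\<Sum>B\<in>?F. ?match B A * ?edge B A)"
      by (rule of_bool_SL_eq_times_QL)
  qed (rule borel_measurable_pmf)+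
  also have "\<dots> = (\<Sum>B\<in>?F. measure_pmf.expectation ?P (\<lambda>A. ?match B A * ?edge B A))"
  proof (intro Bochner_Integration.integral_sum measure_pmf.integrable_const_bound[where B=1] AE_pmfI)
    fix B A assume "A \<in> set_pmf ?P"
    then have "0 \<le> q (indicator B l) (A (v, l)) \<and> q (indicator B l) (A (v, l)) \<le> 1" for l
      using q_range[OF ind01] attr_law_values by blast
    then have "\<bar>?edge B A\<bar> \<le> 1" unfolding abs_prod by (intro prod_le_1) auto
    moreover have "\<bar>?match B A\<bar> \<le> 1" by (auto simp: abs_prod intro!: prod_le_1)
    ultimately show "norm (?match B A * ?edge B A) \<le> 1" by (simp add: abs_mult mult_le_one)
  qed (simp_all add: borel_measurable_pmf)
  also have "\<dots> = (\<Sum>B\<in>?F. mu 1 ^ k * mu 0 ^ (L - k) * (Gam mu q 1 ^ k * Gam mu q 0 ^ (L - k)))"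
  proof (intro sum.cong refl)
    fix B assume B: "B \<in> ?F"
    have Gam: "mu 0 * q (indicator B l) 0 + mu 1 * q (indicator B l) 1 = Gam mu q (indicator B l)" for l
      by (simp add: Gam_def)
    have q_nonneg: "0 \<le> q (indicator B l) y" if "y \<in> {0, 1}" for l y
      using q_range[OF ind01 that] by simp
    have "measure_pmf.expectation ?P (\<lambda>A. ?match B A * ?edge B A) =
          (\<Prod>l\<in>{1..L}. mu 0 * of_bool (0 = (indicator B l :: nat)) +
                              mu 1 * of_bool (1 = (indicator B l :: nat))) *
          (\<Prod>l\<in>{1..L}. Gam mu q (indicator B l))"
      unfolding Gam[symmetric]
      by (rule expectation_two_rows_prod[OF uv, where f = "\<lambda>l y. of_bool (y = indicator B l)"
                                                 and g = "\<lambda>l y. q (indicator B l) y"])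
         (simp_all add: q_nonneg)
    also have "(\<Prod>l\<in>{1..L}. mu 0 * of_bool (0 = (indicator B l :: nat)) +
                                mu 1 * of_bool (1 = (indicator B l :: nat))) =
               (\<Prod>l\<in>{1..L}. mu (indicator B l))"
      by (intro prod.cong) (auto simp: indicator_def)
    finally show "measure_pmf.expectation ?P (\<lambda>A. ?match B A * ?edge B A) =
               mu 1 ^ k * mu 0 ^ (L - k) * (Gam mu q 1 ^ k * Gam mu q 0 ^ (L - k))"
      using B prod_indicator_pow[of B L mu] prod_indicator_pow[of B L "Gam mu q"] by simp
  qed
  also have "\<dots> = pmf (binomial_pmf L (mu 1)) k * (Gam mu q 1 ^ k * Gam mu q 0 ^ (L - k))"
    using mu_range by (simp add: n_subsets mu0_eq)
  finally show ?thesis .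
qed

lemma integral_SL_eq_and_mag_edge:
  assumes uv: "u \<in> {1..n}" "v \<in> {1..n}" "u \<noteq> v"
  shows "(\<integral>\<omega>. of_bool (SL L (fst \<omega>) u = k \<and> mag_edge q L (fst \<omega>) (snd \<omega>) u v) \<partial>mag_space mu n L) =
         pmf (binomial_pmf L (mu 1)) k * (Gam mu q 1 ^ k * Gam mu q 0 ^ (L - k))"
proof -
  from uv have ij: "1 \<le> min u v" "min u v < max u v" "max u v \<le> n" by auto
  have "(\<integral>\<omega>. of_bool (SL L (fst \<omega>) u = k \<and> mag_edge q L (fst \<omega>) (snd \<omega>) u v) \<partial>mag_space mu n L) =
        (\<integral>\<omega>. of_bool (SL L (fst \<omega>) u = k) *
             (of_bool (snd \<omega> (min u v, max u v) \<le> QL q L (fst \<omega>) u v) :: real) \<partial>mag_space mu n L)"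
    using uv by (intro Bochner_Integration.integral_cong) (auto simp: mag_edge_def)
  also have "\<dots> = measure_pmf.expectation (attr_law mu n L) (\<lambda>A. of_bool (SL L A u = k) * QL q L A u v)"
    by (rule integral_mag_space_threshold[OF _ ij, where C = 1]) (use QL_range[OF _ q_range] in auto)
  also have "\<dots> = pmf (binomial_pmf L (mu 1)) k * (Gam mu q 1 ^ k * Gam mu q 0 ^ (L - k))"
    by (rule expectation_SL_eq_times_QL[OF uv])
  finally show ?thesis .
qed

lemma integral_isolated_vertex_ge:
  assumes u: "u \<in> {1..n}"
  shows "pmf (binomial_pmf L (mu 1)) k * (1 - real (n - 1) * (Gam mu q 1 ^ k * Gam mu q 0 ^ (L - k))) \<le>
         (\<integral>\<omega>. of_bool ((\<forall>v\<in>{1..n}. \<not> mag_edge q L (fst \<omega>) (snd \<omega>) u v) \<and> SL L (fst \<omega>) u = k)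
           \<partial>mag_space mu n L)"
proof -
  let ?M = "mag_space mu n L"
  let ?S = "\<lambda>\<omega>. SL L (fst \<omega>) u = k" and ?E = "\<lambda>\<omega> v. mag_edge q L (fst \<omega>) (snd \<omega>) u v"
  let ?w = "pmf (binomial_pmf L (mu 1)) k" and ?H = "Gam mu q 1 ^ k * Gam mu q 0 ^ (L - k)"
  have [measurable]: "Measurable.pred ?M ?S"
    by (rule measurable_SL_eq)
  have [measurable]: "Measurable.pred ?M (\<lambda>\<omega>. ?E \<omega> v)" if "v \<in> {1..n}" for v
    using measurable_mag_edge[OF u that] .
  have int_S: "integrable ?M (\<lambda>\<omega>. of_bool (?S \<omega>) :: real)"
    by (rule integrable_of_bool_mag_space) measurable
  have int_SE: "integrable ?M (\<lambda>\<omega>. of_bool (?S \<omega> \<and> ?E \<omega> v) :: real)" if "v \<in> {1..n}" for v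
    by (rule integrable_of_bool_mag_space) (use that in measurable)
  have int_iso: "integrable ?M (\<lambda>\<omega>. of_bool ((\<forall>v\<in>{1..n}. \<not> ?E \<omega> v) \<and> ?S \<omega>) :: real)"
    by (rule integrable_of_bool_mag_space) measurable
  have "(\<integral>\<omega>. (of_bool (?S \<omega>) :: real) - (\<Sum>v\<in>{1..n} - {u}. of_bool (?S \<omega> \<and> ?E \<omega> v)) \<partial>?M) \<le>
        (\<integral>\<omega>. (of_bool ((\<forall>v\<in>{1..n}. \<not> ?E \<omega> v) \<and> ?S \<omega>) :: real) \<partial>?M)"
  proof (rule integral_mono[OF _ int_iso])
    show "integrable ?M (\<lambda>\<omega>. (of_bool (?S \<omega>) :: real) - (\<Sum>v\<in>{1..n} - {u}. of_bool (?S \<omega> \<and> ?E \<omega> v)))"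
      using int_S int_SE by (intro Bochner_Integration.integrable_diff Bochner_Integration.integrable_sum) auto
    show "(of_bool (?S \<omega>) :: real) - (\<Sum>v\<in>{1..n} - {u}. of_bool (?S \<omega> \<and> ?E \<omega> v)) \<le>
          of_bool ((\<forall>v\<in>{1..n}. \<not> ?E \<omega> v) \<and> ?S \<omega>)" for \<omega>
      using u by (intro of_bool_isolated_ge_union_bound) (auto simp: mag_edge_def)
  qed
  moreover have "(\<integral>\<omega>. (of_bool (?S \<omega>) :: real) - (\<Sum>v\<in>{1..n} - {u}. of_bool (?S \<omega> \<and> ?E \<omega> v)) \<partial>?M) =
        (\<integral>\<omega>. of_bool (?S \<omega>) \<partial>?M) - (\<Sum>v\<in>{1..n} - {u}. \<integral>\<omega>. (of_bool (?S \<omega> \<and> ?E \<omega> v) :: real) \<partial>?M)"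
    using int_S int_SE
    by (subst Bochner_Integration.integral_diff)
       (auto simp del: sum_of_bool_eq intro!: Bochner_Integration.integral_sum
        Bochner_Integration.integrable_sum)
  moreover have "(\<Sum>v\<in>{1..n} - {u}. \<integral>\<omega>. of_bool (?S \<omega> \<and> ?E \<omega> v) \<partial>?M) = real (n - 1) * (?w * ?H)"
    using u by (simp add: integral_SL_eq_and_mag_edge card_Diff_singleton)
  ultimately show ?thesis using integral_SL_eq[OF u] by (simp add: algebra_simps)
qed

lemma expected_isolated_ge:
  "real n * pmf (binomial_pmf L (mu 1)) k * (1 - real n * (Gam mu q 1 ^ k * Gam mu q 0 ^ (L - k))) \<le>
   expected_isolated mu q n L k"
proof -
  let ?M = "mag_space mu n L"
  let ?iso = "\<lambda>u \<omega>. (\<forall>v\<in>{1..n}. \<not> mag_edge q L (fst \<omega>) (snd \<omega>) u v) \<and> SL L (fst \<omega>) u = k"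
  let ?w = "pmf (binomial_pmf L (mu 1)) k" and ?H = "Gam mu q 1 ^ k * Gam mu q 0 ^ (L - k)"
  have H: "0 \<le> ?H"
    using mu_range mu_sum q_range by (simp add: Gam_def)
  have [measurable]: "Measurable.pred ?M (\<lambda>\<omega>. SL L (fst \<omega>) u = k)" for u
    by (rule measurable_SL_eq)
  have "Measurable.pred ?M (?iso u)" if "u \<in> {1..n}" for u
    using measurable_mag_edge[OF that] by measurable
  then have int: "integrable ?M (\<lambda>\<omega>. of_bool (?iso u \<omega>) :: real)" if "u \<in> {1..n}" for u
    using that by (intro integrable_of_bool_mag_space)
  have "1 - real n * ?H \<le> 1 - real (n - 1) * ?H"
    using H by (intro diff_left_mono mult_right_mono) auto
  then have "real n * ?w * (1 - real n * ?H) \<le> real n * ?w * (1 - real (n - 1) * ?H)"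
    by (intro mult_left_mono) auto
  also have "\<dots> = (\<Sum>u\<in>{1..n}. ?w * (1 - real (n - 1) * ?H))"
    by (simp only: sum_constant card_atLeastAtMost diff_Suc_1 mult.assoc)
  also have "\<dots> \<le> (\<Sum>u\<in>{1..n}. \<integral>\<omega>. of_bool (?iso u \<omega>) \<partial>?M)"
    by (intro sum_mono integral_isolated_vertex_ge) auto
  also have "\<dots> = (\<integral>\<omega>. (\<Sum>u\<in>{1..n}. of_bool (?iso u \<omega>)) \<partial>?M)"
    using int by (subst Bochner_Integration.integral_sum) auto
  also have "\<dots> = expected_isolated mu q n L k"
    by (simp add: expected_isolated_def isolated_count_def Int_def)
  finally show ?thesis .
qed

end

end

section \<open>Binomial probabilities and the function G\<close>

lemma pmf_binomial_Suc:
  fixes L k :: nat and x :: real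
  assumes k: "k < L" and x: "0 \<le> x" "x \<le> 1"
  shows "pmf (binomial_pmf L x) (Suc k) * (real (Suc k) * (1 - x)) =
         pmf (binomial_pmf L x) k * (real (L - k) * x)"
proof -
  have "Suc k * (L choose Suc k) = (L - k) * (L choose k)"
    by (metis binomial_absorb_comp binomial_absorption)
  then have choose: "real (L choose Suc k) * real (Suc k) = real (L choose k) * real (L - k)"
    by (metis mult.commute of_nat_mult)
  have pow: "(1 - x) ^ (L - k) = (1 - x) ^ (L - Suc k) * (1 - x)"
    using k by (metis Suc_diff_Suc power_Suc2)
  have "pmf (binomial_pmf L x) (Suc k) * (real (Suc k) * (1 - x)) =
        (real (L choose Suc k) * real (Suc k)) * x ^ Suc k * ((1 - x) ^ (L - Suc k) * (1 - x))"
    using x by (simp add: algebra_simps)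
  also have "\<dots> = real (L choose k) * real (L - k) * x ^ Suc k * (1 - x) ^ (L - k)"
    by (simp only: choose pow)
  also have "\<dots> = pmf (binomial_pmf L x) k * (real (L - k) * x)"
    using x by (simp add: algebra_simps)
  finally show ?thesis .
qed

lemma pmf_binomial_le_mode:
  fixes L l k :: nat
  assumes l: "0 < l" "l < L" and k: "k \<le> L"
  shows "pmf (binomial_pmf L (real l / real L)) k \<le> pmf (binomial_pmf L (real l / real L)) l"
proof -
  define x where "x = real l / real L"
  have x: "0 < x" "x < 1" and lx: "real l = x * real L"
    using l by (auto simp: x_def field_simps)
  define t where "t = pmf (binomial_pmf L x)"
  have t_Suc: "t (Suc k) * (real (Suc k) * (1 - x)) = t k * (real (L - k) * x)" if "k < L" for k
    unfolding t_def using pmf_binomial_Suc[OF that, of x] x by simp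
  have pos: "0 < real (Suc k) * (1 - x)" for k
    using x by simp
  have up: "t k \<le> t (Suc k)" if "k < l" for k
  proof -
    from that l have "real (Suc k) * (1 - x) \<le> real (L - k) * x"
      using x lx by (simp add: of_nat_diff algebra_simps)
    then have "t k * (real (Suc k) * (1 - x)) \<le> t (Suc k) * (real (Suc k) * (1 - x))"
      using t_Suc[of k] that l by (simp add: t_def mult_left_mono)
    then show ?thesis by (rule mult_right_le_imp_le[OF _ pos])
  qed
  have down: "t (Suc k) \<le> t k" if "l \<le> k" "k < L" for k
  proof -
    from that have "real (L - k) * x \<le> real (Suc k) * (1 - x)"
      using x lx by (simp add: of_nat_diff algebra_simps)
    then have "t (Suc k) * (real (Suc k) * (1 - x)) \<le> t k * (real (Suc k) * (1 - x))"
      using t_Suc[of k] that by (simp add: t_def mult_left_mono)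
    then show ?thesis by (rule mult_right_le_imp_le[OF _ pos])
  qed
  show ?thesis
  proof (cases "k \<le> l")
    case True
    then have "t k \<le> t l"
    proof (induction k rule: inc_induct)
      case (step k)
      with up[of k] show ?case by simp
    qed simp
    then show ?thesis by (simp add: t_def x_def)
  next
    case False
    then have "l \<le> k" by simp
    then have "t k \<le> t l" using k
    proof (induction k rule: dec_induct)
      case (step k)
      with down[of k] show ?case by simp
    qed simp
    then show ?thesis by (simp add: t_def x_def)
  qed
qed

lemma pmf_binomial_mode_ge:
  fixes L l :: nat
  assumes l: "0 < l" "l < L"
  shows "1 / (real L + 1) \<le> pmf (binomial_pmf L (real l / real L)) l"
proof -
  define x where "x = real l / real L"
  have x: "0 \<le> x" "x \<le> 1"
    using l by (auto simp: x_def field_simps)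
  have "1 = (x + (1 - x)) ^ L" by simp
  also have "\<dots> = (\<Sum>k\<le>L. pmf (binomial_pmf L x) k)"
    unfolding binomial_ring using x by simp
  also have "\<dots> \<le> (\<Sum>k\<le>L. pmf (binomial_pmf L x) l)"
    unfolding x_def by (intro sum_mono pmf_binomial_le_mode l) simp
  also have "\<dots> = (real L + 1) * pmf (binomial_pmf L x) l"
    by simp
  finally show ?thesis
    by (simp add: x_def field_simps)
qed

definition neg_kl :: "real \<Rightarrow> real \<Rightarrow> real" where
  "neg_kl m x = x * (ln m - ln x) + (1 - x) * (ln (1 - m) - ln (1 - x))"

lemma ln_G_eq_neg_kl:
  assumes "0 < x" "x < 1" "0 < m" "m < 1"
  shows "ln (G x m) = neg_kl m x"
  using assms unfolding G_def neg_kl_def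
  by (simp add: ln_mult ln_powr ln_div)

lemma neg_kl_self: "neg_kl m m = 0"
  by (simp add: neg_kl_def)

lemma pmf_binomial_eq_mode_times_exp:
  fixes L l :: nat
  assumes l: "0 < l" "l < L" and m: "0 < m" "m < 1"
  shows "pmf (binomial_pmf L m) l =
         pmf (binomial_pmf L (real l / real L)) l * exp (real L * neg_kl m (real l / real L))"
proof -
  define x where "x = real l / real L"
  have x: "0 < x" "x < 1" using l by (auto simp: x_def field_simps)
  have Lx: "real L * x = real l" and Lx': "real L * (1 - x) = real (L - l)"
    using l by (auto simp: x_def field_simps of_nat_diff)
  have "ln (m ^ l * (1 - m) ^ (L - l)) = real l * ln m + real (L - l) * ln (1 - m)"
    using m by (simp add: ln_mult ln_realpow)
  also have "\<dots> = real l * ln x + real (L - l) * ln (1 - x) + real L * neg_kl m x"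
    unfolding neg_kl_def by (simp add: algebra_simps Lx[symmetric] Lx'[symmetric])
  also have "\<dots> = ln (x ^ l * (1 - x) ^ (L - l) * exp (real L * neg_kl m x))"
    using x by (simp add: ln_mult ln_realpow)
  finally have "m ^ l * (1 - m) ^ (L - l) = x ^ l * (1 - x) ^ (L - l) * exp (real L * neg_kl m x)"
    using x m by (subst (asm) ln_inj_iff) auto
  then show ?thesis
    using x m by (simp add: x_def[symmetric] mult.assoc)
qed

lemma neg_kl_has_derivative:
  assumes "0 < x" "x < 1"
  shows "(neg_kl m has_real_derivative (ln m - ln x - ln (1 - m) + ln (1 - x))) (at x)"
  unfolding neg_kl_def
  by (rule derivative_eq_intros refl | use assms in force)+

lemma isCont_neg_kl: "0 < x \<Longrightarrow> x < 1 \<Longrightarrow> isCont (neg_kl m) x"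
  using neg_kl_has_derivative DERIV_isCont by blast

lemma neg_kl_strict_mono:
  assumes "0 < a" "a < b" "b \<le> m" "m < 1"
  shows "neg_kl m a < neg_kl m b"
proof (rule DERIV_pos_imp_increasing_open[OF assms(2)])
  fix x assume "a < x" "x < b"
  with assms have x: "0 < x" "x < 1" "x < m" by auto
  then have "ln x < ln m" "ln (1 - m) < ln (1 - x)" using assms by auto
  with neg_kl_has_derivative[OF x(1,2), where m = m]
  show "\<exists>y. (neg_kl m has_real_derivative y) (at x) \<and> 0 < y" by force
next
  show "continuous_on {a..b} (neg_kl m)"
    using assms by (intro continuous_at_imp_continuous_on ballI isCont_neg_kl) auto
qed

lemma neg_kl_tendsto_at_right_0:
  assumes "m < 1"
  shows "(neg_kl m \<longlongrightarrow> ln (1 - m)) (at_right 0)"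
proof -
  have "((\<lambda>x::real. x * ln x) \<longlongrightarrow> 0) (at_right 0)" by real_asymp
  moreover have "((\<lambda>x::real. ln (1 - x)) \<longlongrightarrow> ln (1 - 0)) (at_right 0)"
    by (intro tendsto_intros tendsto_ident_at) auto
  ultimately have "((\<lambda>x. x * ln m - x * ln x + (1 - x) * (ln (1 - m) - ln (1 - x))) \<longlongrightarrow>
          0 * ln m - 0 + (1 - 0) * (ln (1 - m) - ln (1 - 0))) (at_right 0)"
    by (intro tendsto_intros tendsto_ident_at) auto
  moreover have "(\<lambda>x. x * ln m - x * ln x + (1 - x) * (ln (1 - m) - ln (1 - x))) = neg_kl m"
    by (simp add: neg_kl_def fun_eq_iff algebra_simps)
  ultimately show ?thesis by simp
qed

section \<open>The threshold nu_star\<close>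

lemma exists_right_neg:
  fixes f :: "real \<Rightarrow> real"
  assumes "(f \<longlongrightarrow> c) (at_right a)" "c < 0" "a < b"
  shows "\<exists>x\<in>{a<..<b}. f x < 0"
proof -
  have "eventually (\<lambda>x. f x < 0) (at_right a)"
    using assms(1,2) by (rule order_tendstoD(2))
  moreover have "eventually (\<lambda>x. x < b) (at_right a)"
    using assms(3) by (intro order_tendstoD(2)[OF tendsto_ident_at])
  moreover have "eventually (\<lambda>x. a < x) (at_right a)"
    by (rule eventually_at_right_less)
  ultimately have "eventually (\<lambda>x. f x < 0 \<and> a < x \<and> x < b) (at_right a)"
    by eventually_elim auto
  then obtain x where "f x < 0 \<and> a < x \<and> x < b"
    using eventually_happens'[OF trivial_limit_at_right_real] by blast
  then show ?thesis by auto
qed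

lemma exists_neg_kl_root:
  assumes m: "0 < m" "m < 1" and c: "1 + \<rho> * ln (1 - m) < 0"
  shows "\<exists>x\<in>{0<..<m}. 1 + \<rho> * neg_kl m x = 0"
proof -
  have "((\<lambda>x. 1 + \<rho> * neg_kl m x) \<longlongrightarrow> 1 + \<rho> * ln (1 - m)) (at_right 0)"
    using m by (intro tendsto_intros neg_kl_tendsto_at_right_0)
  then obtain a where a: "a \<in> {0<..<m}" "1 + \<rho> * neg_kl m a < 0"
    using exists_right_neg[OF _ c m(1)] by blast
  have "continuous_on {a..m} (\<lambda>x. 1 + \<rho> * neg_kl m x)"
    using a m by (intro continuous_intros continuous_at_imp_continuous_on ballI isCont_neg_kl) auto
  then obtain x where x: "a \<le> x" "x \<le> m" "1 + \<rho> * neg_kl m x = 0"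
    using IVT'[of "\<lambda>x. 1 + \<rho> * neg_kl m x" a 0 m] a by (auto simp: neg_kl_self)
  moreover have "x \<noteq> m"
    using x(3) by (auto simp: neg_kl_self)
  ultimately show ?thesis
    using a by auto
qed

lemma nu_star_root:
  assumes m: "0 < mu 1" "mu 1 < 1" and rho: "0 < \<rho>" and c: "1 + \<rho> * ln (1 - mu 1) < 0"
  shows "nu_star mu \<rho> \<in> {0<..<mu 1}" and "1 + \<rho> * neg_kl (mu 1) (nu_star mu \<rho>) = 0"
proof -
  let ?root = "\<lambda>\<nu>. \<nu> \<in> {0<..<mu 1} \<and> 1 + \<rho> * neg_kl (mu 1) \<nu> = 0"
  have G: "1 + \<rho> * ln (G \<nu> (mu 1)) = 0 \<longleftrightarrow> 1 + \<rho> * neg_kl (mu 1) \<nu> = 0" if "\<nu> \<in> {0<..<mu 1}" for \<nu>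
    using that m by (simp add: ln_G_eq_neg_kl)
  obtain x where x: "?root x"
    using exists_neg_kl_root[OF m c] by blast
  have "y = x" if "?root y" for y
  proof (rule ccontr)
    assume "y \<noteq> x"
    then have "neg_kl (mu 1) y \<noteq> neg_kl (mu 1) x"
      using neg_kl_strict_mono[of y x "mu 1"] neg_kl_strict_mono[of x y "mu 1"] that x m
      by (cases "y < x") auto
    moreover have "\<rho> * neg_kl (mu 1) y = \<rho> * neg_kl (mu 1) x"
      using that x by linarith
    ultimately show False
      using rho by simp
  qed
  with x have uniq: "\<exists>!\<nu>. ?root \<nu>" by blast
  have "(\<lambda>\<nu>. \<nu> \<in> {0<..<mu 1} \<and> 1 + \<rho> * ln (G \<nu> (mu 1)) = 0) = ?root"
    using G by auto
  then have "nu_star mu \<rho> = (THE \<nu>. ?root \<nu>)"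
    unfolding nu_star_def by simp
  with theI'[OF uniq] have "?root (nu_star mu \<rho>)" by simp
  then show "nu_star mu \<rho> \<in> {0<..<mu 1}" and "1 + \<rho> * neg_kl (mu 1) (nu_star mu \<rho>) = 0"
    by auto
qed

section \<open>Asymptotics along an admissible scaling\<close>

lemma filterlim_ln_real_sequentially: "filterlim (\<lambda>n. ln (real n)) at_top sequentially"
  by (rule filterlim_compose[OF ln_at_top filterlim_real_sequentially])

lemma filterlim_exp_mult_ln_at_top:
  assumes "(f \<longlongrightarrow> c) sequentially" "0 < c"
  shows "filterlim (\<lambda>n. exp (f n * ln (real n))) at_top sequentially"
  using filterlim_tendsto_pos_mult_at_top[OF assms filterlim_ln_real_sequentially]
  by (rule filterlim_compose[OF exp_at_top])

lemma tendsto_exp_mult_ln_0: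
  assumes "(f \<longlongrightarrow> c) sequentially" "c < 0"
  shows "((\<lambda>n. exp (f n * ln (real n))) \<longlongrightarrow> 0) sequentially"
  using filterlim_tendsto_neg_mult_at_bot[OF assms filterlim_ln_real_sequentially]
  by (rule filterlim_compose[OF exp_at_bot])

context
  fixes L ls :: "nat \<Rightarrow> nat" and \<rho> \<nu> :: real
  assumes rho_pos: "0 < \<rho>"
    and L_ratio: "((\<lambda>n. real (L n) / ln (real n)) \<longlongrightarrow> \<rho>) sequentially"
    and ls_ratio: "((\<lambda>n. real (ls n) / real (L n)) \<longlongrightarrow> \<nu>) sequentially"
    and nu: "0 < \<nu>" "\<nu> < 1"
begin

lemma eventually_ln_pos: "eventually (\<lambda>n. 0 < ln (real n)) sequentially"
  using eventually_gt_at_top[of "1::nat"] by eventually_elim simp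

lemma filterlim_L_at_top: "filterlim (\<lambda>n. real (L n)) at_top sequentially"
proof -
  have "filterlim (\<lambda>n. real (L n) / ln (real n) * ln (real n)) at_top sequentially"
    by (rule filterlim_tendsto_pos_mult_at_top[OF L_ratio rho_pos filterlim_ln_real_sequentially])
  moreover have "eventually (\<lambda>n. real (L n) / ln (real n) * ln (real n) = real (L n)) sequentially"
    using eventually_ln_pos by eventually_elim simp
  ultimately show ?thesis
    by (simp only: filterlim_cong[OF refl refl])
qed

lemma eventually_ls_between: "eventually (\<lambda>n. 0 < ls n \<and> ls n < L n) sequentially"
proof -
  have "eventually (\<lambda>n. 0 < real (ls n) / real (L n)) sequentially"
       "eventually (\<lambda>n. real (ls n) / real (L n) < 1) sequentially"
    using ls_ratio nu by (auto intro: order_tendstoD)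
  then show ?thesis
  proof eventually_elim
    case (elim n)
    then have "0 < real (L n)" by (simp add: zero_less_divide_iff)
    with elim show ?case by (simp add: zero_less_divide_iff divide_less_eq)
  qed
qed

lemma ln_Suc_L_over_ln_tendsto_0: "((\<lambda>n. ln (real (L n) + 1) / ln (real n)) \<longlongrightarrow> 0) sequentially"
proof -
  have L1: "filterlim (\<lambda>n. real (L n) + 1) at_top sequentially"
    using filterlim_tendsto_add_at_top[OF tendsto_const filterlim_L_at_top, of 1]
    by (simp add: add.commute)
  have "((\<lambda>y::real. ln y / y) \<longlongrightarrow> 0) at_top" by real_asymp
  from filterlim_compose[OF this L1]
  have "((\<lambda>n. ln (real (L n) + 1) / (real (L n) + 1) * (real (L n) / ln (real n) + 1 / ln (real n)))
          \<longlongrightarrow> 0 * (\<rho> + 0)) sequentially"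
    by (intro tendsto_mult tendsto_add L_ratio tendsto_divide_0[OF tendsto_const]
        filterlim_at_top_imp_at_infinity[OF filterlim_ln_real_sequentially])
  moreover have "eventually (\<lambda>n. ln (real (L n) + 1) / (real (L n) + 1) *
      (real (L n) / ln (real n) + 1 / ln (real n)) = ln (real (L n) + 1) / ln (real n)) sequentially"
    using eventually_ln_pos
  proof eventually_elim
    case (elim n)
    have "real (L n) / ln (real n) + 1 / ln (real n) = (real (L n) + 1) / ln (real n)"
      by (simp add: add_divide_distrib)
    moreover have "real (L n) + 1 \<noteq> 0" by simp
    ultimately show ?case by simp
  qed
  ultimately show ?thesis
    by (simp add: Lim_transform_eventually)
qed

lemma binomial_mass_tendsto_at_top:
  assumes m: "0 < m" "m < 1" and above: "0 < 1 + \<rho> * neg_kl m \<nu>"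
  shows "filterlim (\<lambda>n. real n * pmf (binomial_pmf (L n) m) (ls n)) at_top sequentially"
proof -
  define x where "x n = real (ls n) / real (L n)" for n
  define E where "E n = 1 + real (L n) / ln (real n) * neg_kl m (x n) - ln (real (L n) + 1) / ln (real n)"
    for n
  have "(x \<longlongrightarrow> \<nu>) sequentially"
    unfolding x_def by (rule ls_ratio)
  then have "((\<lambda>n. neg_kl m (x n)) \<longlongrightarrow> neg_kl m \<nu>) sequentially"
    by (rule isCont_tendsto_compose[OF isCont_neg_kl[OF nu]])
  then have "(E \<longlongrightarrow> 1 + \<rho> * neg_kl m \<nu> - 0) sequentially"
    unfolding E_def by (intro tendsto_intros L_ratio ln_Suc_L_over_ln_tendsto_0)
  then have "filterlim (\<lambda>n. exp (E n * ln (real n))) at_top sequentially"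
    using above by (intro filterlim_exp_mult_ln_at_top) auto
  moreover have "eventually (\<lambda>n. exp (E n * ln (real n)) \<le> real n * pmf (binomial_pmf (L n) m) (ls n))
                   sequentially"
    using eventually_ls_between eventually_ln_pos eventually_gt_at_top[of "0::nat"]
  proof eventually_elim
    case (elim n)
    then have l: "0 < ls n" "ls n < L n" and n: "0 < n" by auto
    have "E n * ln (real n) = ln (real n) + real (L n) / ln (real n) * ln (real n) * neg_kl m (x n) -
                              ln (real (L n) + 1) / ln (real n) * ln (real n)"
      by (simp add: E_def algebra_simps)
    also have "\<dots> = ln (real n) + real (L n) * neg_kl m (x n) - ln (real (L n) + 1)"
      using elim by simp
    finally have "exp (E n * ln (real n)) =
                  exp (ln (real n)) * exp (real (L n) * neg_kl m (x n)) / exp (ln (real (L n) + 1))"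
      by (simp add: exp_add exp_diff)
    also have "\<dots> = real n / (real (L n) + 1) * exp (real (L n) * neg_kl m (x n))"
      using n by simp
    also have "\<dots> \<le> real n * pmf (binomial_pmf (L n) (x n)) (ls n) * exp (real (L n) * neg_kl m (x n))"
    proof (rule mult_right_mono)
      show "real n / (real (L n) + 1) \<le> real n * pmf (binomial_pmf (L n) (x n)) (ls n)"
        using mult_left_mono[OF pmf_binomial_mode_ge[OF l], of "real n"]
        by (simp only: x_def times_divide_eq_right mult_1_right of_nat_0_le_iff)
    qed (rule exp_ge_zero)
    also have "\<dots> = real n * pmf (binomial_pmf (L n) m) (ls n)"
      by (simp only: x_def pmf_binomial_eq_mode_times_exp[OF l m] mult.assoc)
    finally show ?case .
  qed
  ultimately show ?thesis
    by (rule filterlim_at_top_mono)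
qed

lemma power_mass_tendsto_0:
  assumes g: "0 < g0" "0 < g1" and below: "1 + \<rho> * (\<nu> * ln g1 + (1 - \<nu>) * ln g0) < 0"
  shows "((\<lambda>n. real n * (g1 ^ ls n * g0 ^ (L n - ls n))) \<longlongrightarrow> 0) sequentially"
proof -
  define x where "x n = real (ls n) / real (L n)" for n
  define E where "E n = 1 + real (L n) / ln (real n) * (x n * ln g1 + (1 - x n) * ln g0)" for n
  have "(E \<longlongrightarrow> 1 + \<rho> * (\<nu> * ln g1 + (1 - \<nu>) * ln g0)) sequentially"
    unfolding E_def x_def by (intro tendsto_intros L_ratio ls_ratio)
  then have "((\<lambda>n. exp (E n * ln (real n))) \<longlongrightarrow> 0) sequentially"
    using below by (rule tendsto_exp_mult_ln_0)
  moreover have "eventually (\<lambda>n. exp (E n * ln (real n)) = real n * (g1 ^ ls n * g0 ^ (L n - ls n)))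
                   sequentially"
    using eventually_ls_between eventually_ln_pos eventually_gt_at_top[of "0::nat"]
  proof eventually_elim
    case (elim n)
    then have Lx: "real (L n) * x n = real (ls n)" "real (L n) * (1 - x n) = real (L n - ls n)"
      by (auto simp: x_def right_diff_distrib of_nat_diff)
    have "E n * ln (real n) = ln (real n) + real (L n) / ln (real n) * ln (real n) *
                               (x n * ln g1 + (1 - x n) * ln g0)"
      by (simp add: E_def algebra_simps)
    also have "\<dots> = ln (real n) + real (L n) * (x n * ln g1 + (1 - x n) * ln g0)"
      using elim by simp
    also have "\<dots> = ln (real n) + (real (L n) * x n) * ln g1 + (real (L n) * (1 - x n)) * ln g0"
      by (simp add: algebra_simps)
    also have "\<dots> = ln (real n) + real (ls n) * ln g1 + real (L n - ls n) * ln g0"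
      by (simp only: Lx)
    finally have "E n * ln (real n) = ln (real n) + real (ls n) * ln g1 + real (L n - ls n) * ln g0" .
    then have "exp (E n * ln (real n)) = exp (ln (real n)) * exp (ln g1) ^ ls n * exp (ln g0) ^ (L n - ls n)"
      by (simp only: exp_add exp_of_nat_mult)
    with elim g show ?case
      by simp
  qed
  ultimately show ?thesis
    by (rule Lim_transform_eventually)
qed

end

lemma admissible_ratio_tendsto:
  assumes "admissible \<rho> L" "0 < \<rho>"
  shows "((\<lambda>n. real (L n) / ln (real n)) \<longlongrightarrow> \<rho>) sequentially"
proof -
  have "((\<lambda>n. real (L n) / (\<rho> * ln (real n))) \<longlongrightarrow> 1) sequentially"
    using assms(1) unfolding admissible_def
    by (intro asymp_equivD_strong always_eventually) (auto simp: Nat.not_gr0)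
  then have "((\<lambda>n. \<rho> * (real (L n) / (\<rho> * ln (real n)))) \<longlongrightarrow> \<rho> * 1) sequentially"
    by (rule tendsto_mult_left)
  then show ?thesis
    using assms(2) by simp
qed

lemma expected_isolated_tendsto_at_top:
  assumes mu: "0 < mu 1" "mu 1 < 1" "mu 0 + mu 1 = 1"
    and q: "\<And>a b. a \<in> {0, 1} \<Longrightarrow> b \<in> {0, 1} \<Longrightarrow> 0 \<le> q a b \<and> q a b \<le> 1"
    and Gam_pos: "0 < Gam mu q 0" "0 < Gam mu q 1"
    and rho_pos: "0 < \<rho>"
    and L_ratio: "((\<lambda>n. real (L n) / ln (real n)) \<longlongrightarrow> \<rho>) sequentially"
    and ls_ratio: "((\<lambda>n. real (ls n) / real (L n)) \<longlongrightarrow> \<nu>) sequentially"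
    and nu: "0 < \<nu>" "\<nu> < 1"
    and above: "0 < 1 + \<rho> * neg_kl (mu 1) \<nu>"
    and below: "1 + \<rho> * (\<nu> * ln (Gam mu q 1) + (1 - \<nu>) * ln (Gam mu q 0)) < 0"
  shows "filterlim (\<lambda>n. expected_isolated mu q n (L n) (ls n)) at_top sequentially"
proof -
  let ?w = "\<lambda>n. real n * pmf (binomial_pmf (L n) (mu 1)) (ls n)"
  let ?h = "\<lambda>n. real n * (Gam mu q 1 ^ ls n * Gam mu q 0 ^ (L n - ls n))"
  have "((\<lambda>n. 1 - ?h n) \<longlongrightarrow> 1 - 0) sequentially"
    by (intro tendsto_diff tendsto_const power_mass_tendsto_0[OF rho_pos L_ratio ls_ratio nu Gam_pos below])
  then have lim: "filterlim (\<lambda>n. (1 - ?h n) * ?w n) at_top sequentially"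
    by (rule filterlim_tendsto_pos_mult_at_top
          [OF _ _ binomial_mass_tendsto_at_top[OF rho_pos L_ratio ls_ratio nu mu(1,2) above]]) simp
  have le: "(1 - ?h n) * ?w n \<le> expected_isolated mu q n (L n) (ls n)" for n
    using expected_isolated_ge[of mu q n "L n" "ls n"] mu q by (simp add: mult_ac)
  show ?thesis
    by (rule filterlim_at_top_mono[OF lim always_eventually[OF allI[OF le]]])
qed

lemma exists_nu_above_root:
  assumes m: "m < 1" and rho_pos: "0 < \<rho>"
    and root: "\<nu>\<^sub>s \<in> {0<..<m}" "1 + \<rho> * neg_kl m \<nu>\<^sub>s = 0"
    and below: "1 + \<rho> * (\<nu>\<^sub>s * ln g1 + (1 - \<nu>\<^sub>s) * ln g0) < 0"
  shows "\<exists>\<nu>\<in>{\<nu>\<^sub>s<..<m}. 0 < 1 + \<rho> * neg_kl m \<nu> \<and> 1 + \<rho> * (\<nu> * ln g1 + (1 - \<nu>) * ln g0) < 0"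
proof -
  have "((\<lambda>\<nu>. 1 + \<rho> * (\<nu> * ln g1 + (1 - \<nu>) * ln g0)) \<longlongrightarrow>
          1 + \<rho> * (\<nu>\<^sub>s * ln g1 + (1 - \<nu>\<^sub>s) * ln g0)) (at_right \<nu>\<^sub>s)"
    by (intro tendsto_intros)
  then obtain \<nu> where \<nu>: "\<nu> \<in> {\<nu>\<^sub>s<..<m}" "1 + \<rho> * (\<nu> * ln g1 + (1 - \<nu>) * ln g0) < 0"
    using exists_right_neg below root(1) by fastforce
  have "\<rho> * neg_kl m \<nu>\<^sub>s < \<rho> * neg_kl m \<nu>"
    using neg_kl_strict_mono[of \<nu>\<^sub>s \<nu> m] root(1) \<nu>(1) m rho_pos by simp
  with root(2) have "0 < 1 + \<rho> * neg_kl m \<nu>" by linarith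
  with \<nu> show ?thesis by blast
qed

theorem proposition4:
  fixes mu :: "nat \<Rightarrow> real" and q :: "nat \<Rightarrow> nat \<Rightarrow> real" and \<rho> :: real and L :: "nat \<Rightarrow> nat"
  assumes mu_pos: "0 < mu 0" "mu 0 < 1" "0 < mu 1" "mu 1 < 1"
    and mu_sum: "mu 0 + mu 1 = 1"
    and q_sym: "q 0 1 = q 1 0"
    and q_range: "\<And>a b. a \<in> {0, 1} \<Longrightarrow> b \<in> {0, 1} \<Longrightarrow> 0 < q a b \<and> q a b < 1"
    and rho_pos: "0 < \<rho>"
    and Gam_lt: "Gam mu q 0 < Gam mu q 1"
    and mu0_cond: "1 + \<rho> * ln (mu 0) < 0"
    and star_cond: "1 + \<rho> * ln (Gam mu q 1 powr nu_star mu \<rho> * Gam mu q 0 powr (1 - nu_star mu \<rho>)) < 0"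
    and adm: "admissible \<rho> L"
  shows "\<exists>\<nu>\<in>{nu_star mu \<rho><..<mu 1}. \<forall>ls. associated \<nu> L ls \<longrightarrow>
           filterlim (\<lambda>n. expected_isolated mu q n (L n) (ls n)) at_top sequentially"
proof -
  have Gam_pos: "0 < Gam mu q a" if "a \<in> {0, 1}" for a
    using that mu_pos q_range[of a 0] q_range[of a 1] unfolding Gam_def by (intro add_pos_pos mult_pos_pos) auto
  have "1 - mu 1 = mu 0"
    using mu_sum by simp
  note star = nu_star_root[where mu = mu, OF mu_pos(3,4) rho_pos, unfolded this, OF mu0_cond]
  have "1 + \<rho> * (nu_star mu \<rho> * ln (Gam mu q 1) + (1 - nu_star mu \<rho>) * ln (Gam mu q 0)) < 0"
    using star_cond Gam_pos[of 0] Gam_pos[of 1] by (simp add: ln_mult ln_powr)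
  then obtain \<nu> where \<nu>: "\<nu> \<in> {nu_star mu \<rho><..<mu 1}" "0 < 1 + \<rho> * neg_kl (mu 1) \<nu>"
      "1 + \<rho> * (\<nu> * ln (Gam mu q 1) + (1 - \<nu>) * ln (Gam mu q 0)) < 0"
    using exists_nu_above_root[OF mu_pos(4) rho_pos star] by blast
  show ?thesis
  proof (intro bexI[OF _ \<nu>(1)] allI impI)
    fix ls assume "associated \<nu> L ls"
    then show "filterlim (\<lambda>n. expected_isolated mu q n (L n) (ls n)) at_top sequentially"
      using \<nu> star(1) mu_pos mu_sum q_range Gam_pos rho_pos admissible_ratio_tendsto[OF adm rho_pos]
      by (intro expected_isolated_tendsto_at_top[where \<rho> = \<rho>]) (auto simp: associated_def less_imp_le)
  qed
qed

end
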